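(* For every integer $n\ge 1$, $$\Phi^{(2)}[aq^n; b, b'; c, c'; x, y] = \Phi^{(2)}[a; b, b'; c, c'; x, y] + \frac{ax(1-b)}{1-c} \sum_{k=1}^n q^{k-1} \Phi^{(2)}[aq^k; bq, b'; cq, c'; x, y] + \frac{ay(1-b')}{1-c'} \sum_{k=1}^n q^{k-1} \Phi^{(2)}[aq^k; b, b'q; c, c'q; xq, y]$$ and $$\Phi^{(2)}[aq^{-n}; b, b'; c, c'; x, y] = \Phi^{(2)}[a; b, b'; c, c'; x, y] - \frac{ax(1-b)}{1-c} \sum_{k=1}^n q^{-k} \Phi^{(2)}[aq^{1-k}; bq, b'; cq, c'; x, y] - \frac{ay(1-b')}{1-c'} \sum_{k=1}^n q^{-k} \Phi^{(2)}[aq^{1-k}; b, b'q; c, c'q; xq, y].$$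
   Context: Let $q$ be a complex number with $0<|q|<1$. For complex $z$ and integer $m\ge 0$, $(z;q)_m=\prod_{j=0}^{m-1}(1-zq^j)$, with $(z;q)_0=1$. The $q$-Appell function $\Phi^{(2)}$ is $$\Phi^{(2)}[a; b, b'; c, c'; x, y] = \sum_{m, n \geq 0} \frac{(a; q)_{m+n} (b; q)_m (b'; q)_n}{(q; q)_m (q; q)_n (c; q)_m (c'; q)_n} x^m y^n.$$ Identities are understood as identities of power series in $x,y$ (formal, or convergent for small $|x|,|y|$), with complex parameters chosen so that no denominator occurring vanishes. *)

theory Defs
  imports "HOL-Analysis.Analysis"
begin

definition qpoch :: "complex \<Rightarrow> complex \<Rightarrow> nat \<Rightarrow> complex" where
  "qpoch z q m = (\<Prod>j<m. 1 - z * q ^ j)"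

definition qAppell2 ::
  "complex \<Rightarrow> complex \<Rightarrow> complex \<Rightarrow> complex \<Rightarrow> complex \<Rightarrow> complex \<Rightarrow> complex \<Rightarrow> complex \<Rightarrow> complex" where
  "qAppell2 q a b b' c c' x y =
     (\<Sum>\<^sub>\<infinity>(m, n) \<in> UNIV.
        qpoch a q (m + n) * qpoch b q m * qpoch b' q n /
        (qpoch q q m * qpoch q q n * qpoch c q m * qpoch c' q n) * x ^ m * y ^ n)"

end

theory Submission imports Defs begin

(* Coefficientwise, with N = m + n, the identity (aq;q)_N - (a;q)_N = a (1 - q^N) (aq;q)_(N-1)
   and the splitting 1 - q^(m+n) = (1 - q^m) + q^m (1 - q^n) break Phi[aq] - Phi[a] into two
   double series. Absorbing (1 - q^m)/(q;q)_m = 1/(q;q)_(m-1), (b;q)_m = (1 - b) (bq;q)_(m-1),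
   (c;q)_m = (1 - c) (cq;q)_(m-1) and shifting m by one turns the first into
   a x (1 - b)/(1 - c) Phi[aq; bq, b'; cq, c'; x, y]; in the second the same happens with n,
   and the extra factor q^m turns x into xq. This contiguous relation in a, telescoped along
   a, aq, ..., aq^n (resp. aq^-n, ..., a), gives both identities. All series involved converge
   absolutely on one common disc, since |a q^k| <= |a|/|q|^n for |k| <= n and the factors
   1/(1 - c q^j) stay bounded as q^j -> 0. *)

lemma qpoch_Suc: "qpoch z q (Suc m) = qpoch z q m * (1 - z * q ^ m)"
  by (simp add: qpoch_def)

lemma qpoch_Suc_shift: "qpoch z q (Suc m) = (1 - z) * qpoch (z * q) q m"
  unfolding qpoch_def by (subst prod.lessThan_Suc_shift) (simp add: mult.assoc)

lemma qpoch_nonzero: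
  assumes "\<And>j. z * q ^ j \<noteq> 1"
  shows "qpoch z q m \<noteq> 0"
  using assms by (simp add: qpoch_def)

lemma qpoch_mult_q_diff: "qpoch (z * q) q m - qpoch z q m = z * (1 - q ^ m) * qpoch (z * q) q (m - 1)"
proof (cases m)
  case (Suc k)
  then show ?thesis
    by (simp only: qpoch_Suc_shift[of z] qpoch_Suc[of "z * q"] diff_Suc_1) (simp add: algebra_simps)
qed (simp add: qpoch_def)

lemma norm_qpoch_le:
  assumes "norm q \<le> 1" and "1 + norm z \<le> M"
  shows "norm (qpoch z q m) \<le> M ^ m"
proof -
  have "norm (1 - z * q ^ j) \<le> M" for j
  proof -
    have "norm (1 - z * q ^ j) \<le> 1 + norm z * norm q ^ j"
      by (metis norm_mult norm_power norm_one norm_triangle_ineq4)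
    also have "\<dots> \<le> 1 + norm z"
      using assms(1) by (simp add: mult_left_le power_le_one)
    finally show ?thesis using assms(2) by linarith
  qed
  then have "(\<Prod>j<m. norm (1 - z * q ^ j)) \<le> (\<Prod>j<m. M)"
    by (intro prod_mono) auto
  then show ?thesis
    by (simp add: qpoch_def prod_norm)
qed

lemma norm_inverse_qpoch_le:
  assumes "\<And>j. norm (inverse (1 - z * q ^ j)) \<le> M"
  shows "norm (inverse (qpoch z q m)) \<le> M ^ m"
proof -
  have "(\<Prod>j<m. norm (inverse (1 - z * q ^ j))) \<le> (\<Prod>j<m. M)"
    using assms by (intro prod_mono) auto
  then show ?thesis
    by (simp add: qpoch_def prod_norm prod_inversef[symmetric])
qed

lemma bounded_inverse_one_minus_geometric:
  fixes c q :: "'a :: real_normed_field"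
  assumes "norm q < 1" and "\<And>j. c * q ^ j \<noteq> 1"
  obtains K where "\<And>j. norm (inverse (1 - c * q ^ j)) \<le> K"
proof -
  have "(\<lambda>j. c * q ^ j) \<longlonglongrightarrow> c * 0"
    by (intro tendsto_mult tendsto_const LIMSEQ_power_zero assms(1))
  then have "(\<lambda>j. inverse (1 - c * q ^ j)) \<longlonglongrightarrow> inverse (1 - 0)"
    by (intro tendsto_inverse tendsto_diff tendsto_const) auto
  then have "Bseq (\<lambda>j. inverse (1 - c * q ^ j))"
    by (intro convergent_imp_Bseq) (auto simp: convergent_def)
  then show ?thesis using that by (auto elim!: BseqE)
qed

lemma summable_on_geometric_product:
  fixes r s :: real
  assumes "0 \<le> r" "r < 1" "0 \<le> s" "s < 1"
  shows "(\<lambda>(m::nat, n::nat). r ^ m * s ^ n) summable_on UNIV"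
proof -
  have "(\<lambda>(m::nat, n::nat). r ^ m * s ^ n) summable_on Sigma UNIV (\<lambda>_. UNIV)"
  proof (rule summable_on_SigmaI[where g = "\<lambda>m. r ^ m / (1 - s)"])
    fix m :: nat
    have "(\<lambda>n. r ^ m * s ^ n) sums (r ^ m * (1 / (1 - s)))"
      using geometric_sums[of s] assms by (intro sums_mult) auto
    then show "((\<lambda>n. (\<lambda>(m, n). r ^ m * s ^ n) (m, n)) has_sum r ^ m / (1 - s)) UNIV"
      using assms by (auto intro!: sums_nonneg_imp_has_sum)
  next
    have "(\<lambda>m. r ^ m / (1 - s)) sums (1 / (1 - r) / (1 - s))"
      using geometric_sums[of r] assms by (intro sums_divide) auto
    then show "(\<lambda>m. r ^ m / (1 - s)) summable_on UNIV"
      using assms by (auto intro!: summable_nonneg_imp_summable_on_strong simp: sums_iff)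
  qed (use assms in auto)
  then show ?thesis by simp
qed

lemma has_sum_zero_extension_iff:
  assumes "inj h" and "\<And>x. g (h x) = f x" and "\<And>y. y \<notin> range h \<Longrightarrow> g y = 0"
  shows "(g has_sum S) UNIV \<longleftrightarrow> (f has_sum S) UNIV"
proof -
  have "(g has_sum S) UNIV \<longleftrightarrow> (g has_sum S) (range h)"
    using assms(3) by (intro has_sum_cong_neutral) auto
  also have "\<dots> \<longleftrightarrow> (f has_sum S) UNIV"
    using assms(2) by (simp add: has_sum_reindex[OF assms(1)] comp_def)
  finally show ?thesis .
qed

definition qAppell2_term ::
  "complex \<Rightarrow> complex \<Rightarrow> complex \<Rightarrow> complex \<Rightarrow> complex \<Rightarrow> complex \<Rightarrow> complex \<Rightarrow> complex \<Rightarrow> nat \<times> nat \<Rightarrow> complex" where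
  "qAppell2_term q a b b' c c' x y = (\<lambda>(m, n).
     qpoch a q (m + n) * qpoch b q m * qpoch b' q n /
     (qpoch q q m * qpoch q q n * qpoch c q m * qpoch c' q n) * x ^ m * y ^ n)"

lemma qAppell2_eq_infsum: "qAppell2 q a b b' c c' x y = infsum (qAppell2_term q a b b' c c' x y) UNIV"
  by (simp add: qAppell2_def qAppell2_term_def)

lemma norm_qAppell2_term_le:
  assumes "norm q \<le> 1" and "1 + norm a \<le> M" "1 + norm b \<le> M" "1 + norm b' \<le> M"
    and "\<And>j. norm (inverse (1 - q * q ^ j)) \<le> M"
    and "\<And>j. norm (inverse (1 - c * q ^ j)) \<le> M"
    and "\<And>j. norm (inverse (1 - c' * q ^ j)) \<le> M"
  shows "norm (qAppell2_term q a b b' c c' x y (m, n)) \<le> (M ^ 4 * norm x) ^ m * (M ^ 4 * norm y) ^ n"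
proof -
  have "0 \<le> M" using assms(2) norm_ge_zero[of a] by linarith
  have "norm (qAppell2_term q a b b' c c' x y (m, n)) =
     norm (qpoch a q (m + n)) * norm (qpoch b q m) * norm (qpoch b' q n) *
     norm (inverse (qpoch q q m)) * norm (inverse (qpoch q q n)) *
     norm (inverse (qpoch c q m)) * norm (inverse (qpoch c' q n)) * norm x ^ m * norm y ^ n"
    by (simp add: qAppell2_term_def norm_mult norm_divide norm_power divide_inverse)
  also have "\<dots> \<le> M ^ (m + n) * M ^ m * M ^ n * M ^ m * M ^ n * M ^ m * M ^ n * norm x ^ m * norm y ^ n"
    using \<open>0 \<le> M\<close>
    by (intro mult_mono norm_qpoch_le norm_inverse_qpoch_le assms) (auto intro!: mult_nonneg_nonneg)
  also have "\<dots> = (M ^ 4 * norm x) ^ m * (M ^ 4 * norm y) ^ n"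
    by (simp add: power4_eq_xxxx power_add power_mult_distrib mult_ac)
  finally show ?thesis .
qed

lemma qAppell2_term_summable:
  assumes "norm q \<le> 1" and "1 + norm a \<le> M" "1 + norm b \<le> M" "1 + norm b' \<le> M"
    and "\<And>j. norm (inverse (1 - q * q ^ j)) \<le> M"
    and "\<And>j. norm (inverse (1 - c * q ^ j)) \<le> M"
    and "\<And>j. norm (inverse (1 - c' * q ^ j)) \<le> M"
    and "M ^ 4 * norm x < 1" "M ^ 4 * norm y < 1"
  shows "qAppell2_term q a b b' c c' x y summable_on UNIV"
proof -
  have "0 \<le> M" using assms(2) norm_ge_zero[of a] by linarith
  then have "(\<lambda>(m, n). (M ^ 4 * norm x) ^ m * (M ^ 4 * norm y) ^ n) summable_on UNIV"
    using assms(8,9) by (intro summable_on_geometric_product) auto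
  then have "(\<lambda>p. norm (qAppell2_term q a b b' c c' x y p)) summable_on UNIV"
    by (rule summable_on_comparison_test) (use norm_qAppell2_term_le[OF assms(1-7)] in auto)
  then show ?thesis by (rule abs_summable_summable)
qed

lemma qAppell2_term_contiguous:
  assumes hq: "\<And>j. q * q ^ j \<noteq> 1" and hc: "\<And>j. c * q ^ j \<noteq> 1" and hc': "\<And>j. c' * q ^ j \<noteq> 1"
  shows "qAppell2_term q (a * q) b b' c c' x y (m, n) = qAppell2_term q a b b' c c' x y (m, n)
     + (if m = 0 then 0
        else a * x * (1 - b) / (1 - c) * qAppell2_term q (a * q) (b * q) b' (c * q) c' x y (m - 1, n))
     + (if n = 0 then 0
        else a * y * (1 - b') / (1 - c') * qAppell2_term q (a * q) b (b' * q) c (c' * q) (x * q) y (m, n - 1))"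
proof -
  define R where "R = qpoch b q m * qpoch b' q n /
    (qpoch q q m * qpoch q q n * qpoch c q m * qpoch c' q n) * x ^ m * y ^ n"
  define P where "P = qpoch (a * q) q (m + n - 1)"
  have nz_q: "qpoch q q k \<noteq> 0" for k using hq by (intro qpoch_nonzero) auto
  have nz_c: "qpoch c q k \<noteq> 0" "qpoch (c * q) q k \<noteq> 0" for k
    using hc hc[of "Suc _"] by (auto intro!: qpoch_nonzero simp: mult.assoc)
  have nz_c': "qpoch c' q k \<noteq> 0" "qpoch (c' * q) q k \<noteq> 0" for k
    using hc' hc'[of "Suc _"] by (auto intro!: qpoch_nonzero simp: mult.assoc)
  have "1 - c \<noteq> 0" "1 - c' \<noteq> 0" "1 - q * q ^ k \<noteq> 0" for k
    using hc[of 0] hc'[of 0] hq[of k] by auto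
  note nz = nz_q nz_c nz_c' this
  have "qAppell2_term q a' b b' c c' x y (m, n) = qpoch a' q (m + n) * R" for a'
    by (simp add: qAppell2_term_def R_def)
  then have "qAppell2_term q (a * q) b b' c c' x y (m, n) - qAppell2_term q a b b' c c' x y (m, n)
      = (qpoch (a * q) q (m + n) - qpoch a q (m + n)) * R"
    by (simp add: left_diff_distrib)
  also have "\<dots> = a * (1 - q ^ m) * P * R + a * q ^ m * (1 - q ^ n) * P * R"
    by (simp add: qpoch_mult_q_diff P_def power_add algebra_simps)
  finally have diff: "qAppell2_term q (a * q) b b' c c' x y (m, n) - qAppell2_term q a b b' c c' x y (m, n)
      = a * (1 - q ^ m) * P * R + a * q ^ m * (1 - q ^ n) * P * R" .
  have E1: "(if m = 0 then 0
        else a * x * (1 - b) / (1 - c) * qAppell2_term q (a * q) (b * q) b' (c * q) c' x y (m - 1, n))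
      = a * (1 - q ^ m) * P * R"
  proof (cases m)
    case (Suc k)
    show ?thesis
      unfolding Suc R_def P_def qAppell2_term_def
      by (simp only: qpoch_Suc_shift[of b] qpoch_Suc_shift[of c] qpoch_Suc[of q q] power_Suc
          diff_Suc_1 add_Suc split_def fst_conv snd_conv if_False nat.distinct)
        (use nz in \<open>simp add: divide_simps\<close>)
  qed simp
  have E2: "(if n = 0 then 0
        else a * y * (1 - b') / (1 - c') * qAppell2_term q (a * q) b (b' * q) c (c' * q) (x * q) y (m, n - 1))
      = a * q ^ m * (1 - q ^ n) * P * R"
  proof (cases n)
    case (Suc k)
    show ?thesis
      unfolding Suc R_def P_def qAppell2_term_def
      by (simp only: qpoch_Suc_shift[of b'] qpoch_Suc_shift[of c'] qpoch_Suc[of q q] power_Suc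
          diff_Suc_1 add_Suc_right split_def fst_conv snd_conv if_False nat.distinct power_mult_distrib)
        (use nz in \<open>simp add: divide_simps\<close>)
  qed simp
  show ?thesis unfolding E1 E2 using diff by (simp add: diff_eq_eq ac_simps)
qed

lemma qAppell2_contiguous_if_summable:
  assumes hq: "\<And>j. q * q ^ j \<noteq> 1" and hc: "\<And>j. c * q ^ j \<noteq> 1" and hc': "\<And>j. c' * q ^ j \<noteq> 1"
    and "qAppell2_term q a b b' c c' x y summable_on UNIV"
    and "qAppell2_term q (a * q) (b * q) b' (c * q) c' x y summable_on UNIV"
    and "qAppell2_term q (a * q) b (b' * q) c (c' * q) (x * q) y summable_on UNIV"
  shows "qAppell2 q (a * q) b b' c c' x y = qAppell2 q a b b' c c' x y
     + a * x * (1 - b) / (1 - c) * qAppell2 q (a * q) (b * q) b' (c * q) c' x y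
     + a * y * (1 - b') / (1 - c') * qAppell2 q (a * q) b (b' * q) c (c' * q) (x * q) y"
proof -
  define T0 where "T0 = qAppell2_term q a b b' c c' x y"
  define T1 where "T1 = qAppell2_term q (a * q) (b * q) b' (c * q) c' x y"
  define T2 where "T2 = qAppell2_term q (a * q) b (b' * q) c (c' * q) (x * q) y"
  define C1 where "C1 = a * x * (1 - b) / (1 - c)"
  define C2 where "C2 = a * y * (1 - b') / (1 - c')"
  define G1 where "G1 = (\<lambda>(m, n). if m = 0 then 0 else C1 * T1 (m - 1, n))"
  define G2 where "G2 = (\<lambda>(m, n). if n = 0 then 0 else C2 * T2 (m, n - 1))"
  have has_sum_T: "(T has_sum infsum T UNIV) UNIV" if "T summable_on UNIV" for T :: "nat \<times> nat \<Rightarrow> complex"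
    using that by (simp add: summable_iff_has_sum_infsum)
  have "(G1 has_sum C1 * infsum T1 UNIV) UNIV"
  proof (subst has_sum_zero_extension_iff)
    show "inj (\<lambda>(m, n). (Suc m, n))" by (auto simp: inj_def)
    show "((\<lambda>p. C1 * T1 p) has_sum C1 * infsum T1 UNIV) UNIV"
      using assms(5) unfolding T1_def by (intro has_sum_cmult_right has_sum_T)
  qed (auto simp: G1_def image_def gr0_conv_Suc split: prod.splits)
  moreover have "(G2 has_sum C2 * infsum T2 UNIV) UNIV"
  proof (subst has_sum_zero_extension_iff)
    show "inj (\<lambda>(m, n). (m, Suc n))" by (auto simp: inj_def)
    show "((\<lambda>p. C2 * T2 p) has_sum C2 * infsum T2 UNIV) UNIV"
      using assms(6) unfolding T2_def by (intro has_sum_cmult_right has_sum_T)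
  qed (auto simp: G2_def image_def gr0_conv_Suc split: prod.splits)
  moreover have "(T0 has_sum infsum T0 UNIV) UNIV"
    using assms(4) unfolding T0_def by (rule has_sum_T)
  ultimately have "((\<lambda>p. T0 p + G1 p + G2 p) has_sum infsum T0 UNIV + C1 * infsum T1 UNIV + C2 * infsum T2 UNIV) UNIV"
    by (intro has_sum_add)
  moreover have "(\<lambda>p. T0 p + G1 p + G2 p) = qAppell2_term q (a * q) b b' c c' x y"
    using qAppell2_term_contiguous[OF hq hc hc']
    by (auto simp: fun_eq_iff T0_def T1_def T2_def C1_def C2_def G1_def G2_def)
  ultimately have "(qAppell2_term q (a * q) b b' c c' x y has_sum
      infsum T0 UNIV + C1 * infsum T1 UNIV + C2 * infsum T2 UNIV) UNIV"
    by simp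
  then show ?thesis
    unfolding qAppell2_eq_infsum T0_def T1_def T2_def C1_def C2_def by (rule infsumI)
qed

lemma qAppell2_contiguous_near_zero:
  fixes A :: real
  assumes "norm q < 1" and hc: "\<And>j. c * q ^ j \<noteq> 1" and hc': "\<And>j. c' * q ^ j \<noteq> 1"
  obtains r where "r > 0"
    and "\<And>a x y. norm a \<le> A \<Longrightarrow> norm x < r \<Longrightarrow> norm y < r \<Longrightarrow>
      qAppell2 q (a * q) b b' c c' x y = qAppell2 q a b b' c c' x y
        + a * x * (1 - b) / (1 - c) * qAppell2 q (a * q) (b * q) b' (c * q) c' x y
        + a * y * (1 - b') / (1 - c') * qAppell2 q (a * q) b (b' * q) c (c' * q) (x * q) y"
proof -
  have hq: "q * q ^ j \<noteq> 1" for j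
  proof -
    have "norm (q * q ^ j) \<le> norm q"
      using assms(1) by (simp add: norm_mult norm_power mult_left_le power_le_one)
    then show ?thesis using assms(1) by auto
  qed
  obtain Kq Kc Kc' where
    Kq: "\<And>j. norm (inverse (1 - q * q ^ j)) \<le> Kq" and
    Kc: "\<And>j. norm (inverse (1 - c * q ^ j)) \<le> Kc" and
    Kc': "\<And>j. norm (inverse (1 - c' * q ^ j)) \<le> Kc'"
    using bounded_inverse_one_minus_geometric[OF assms(1)] hq hc hc' by metis
  define M where "M = Max {1 + A, 1 + norm b, 1 + norm b', Kq, Kc, Kc'}"
  have M: "1 + A \<le> M" "1 + norm b \<le> M" "1 + norm b' \<le> M" "Kq \<le> M" "Kc \<le> M" "Kc' \<le> M"
    unfolding M_def by auto
  have "1 \<le> M" using M(2) norm_ge_zero[of b] by linarith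
  have shrink: "norm (z * q) \<le> norm z" for z :: complex
    using assms(1) by (simp add: norm_mult mult_left_le)
  have bound_q: "norm (inverse (1 - q * q ^ j)) \<le> M" for j
    using Kq[of j] M by linarith
  have bound_c: "norm (inverse (1 - c * q ^ j)) \<le> M" "norm (inverse (1 - c * q * q ^ j)) \<le> M" for j
    using Kc[of j] Kc[of "Suc j"] M by (auto simp: mult.assoc)
  have bound_c': "norm (inverse (1 - c' * q ^ j)) \<le> M" "norm (inverse (1 - c' * q * q ^ j)) \<le> M" for j
    using Kc'[of j] Kc'[of "Suc j"] M by (auto simp: mult.assoc)
  have bound_b: "1 + norm (b * q) \<le> M" "1 + norm (b' * q) \<le> M"
    using shrink[of b] shrink[of b'] M by auto
  show ?thesis
  proof (rule that)
    show "0 < 1 / M ^ 4" using \<open>1 \<le> M\<close> by simp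
  next
    fix a x y :: complex
    assume "norm a \<le> A" and x: "norm x < 1 / M ^ 4" and y: "norm y < 1 / M ^ 4"
    then have bound_a: "1 + norm a \<le> M" "1 + norm (a * q) \<le> M"
      using M(1) shrink[of a] by auto
    have small: "M ^ 4 * norm x < 1" "M ^ 4 * norm y < 1"
      using x y \<open>1 \<le> M\<close> by (auto simp: field_simps)
    moreover have "M ^ 4 * norm (x * q) \<le> M ^ 4 * norm x"
      using shrink[of x] \<open>1 \<le> M\<close> by (intro mult_left_mono) auto
    ultimately have small_xq: "M ^ 4 * norm (x * q) < 1" by linarith
    note summable = qAppell2_term_summable[OF less_imp_le[OF assms(1)], where M = M]
    show "qAppell2 q (a * q) b b' c c' x y = qAppell2 q a b b' c c' x y
        + a * x * (1 - b) / (1 - c) * qAppell2 q (a * q) (b * q) b' (c * q) c' x y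
        + a * y * (1 - b') / (1 - c') * qAppell2 q (a * q) b (b' * q) c (c' * q) (x * q) y"
      by (intro qAppell2_contiguous_if_summable hq hc hc' summable bound_a bound_b M(2,3)
          bound_q bound_c bound_c' small small_xq)
  qed
qed

lemma qAppell2_shift_up_telescope:
  assumes "\<And>k. k < n \<Longrightarrow> qAppell2 q (a * q ^ k * q) b b' c c' x y = qAppell2 q (a * q ^ k) b b' c c' x y
      + a * q ^ k * x * (1 - b) / (1 - c) * qAppell2 q (a * q ^ k * q) (b * q) b' (c * q) c' x y
      + a * q ^ k * y * (1 - b') / (1 - c') * qAppell2 q (a * q ^ k * q) b (b' * q) c (c' * q) (x * q) y"
  shows "qAppell2 q (a * q ^ n) b b' c c' x y = qAppell2 q a b b' c c' x y
      + a * x * (1 - b) / (1 - c) *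
          (\<Sum>k=1..n. q ^ (k - 1) * qAppell2 q (a * q ^ k) (b * q) b' (c * q) c' x y)
      + a * y * (1 - b') / (1 - c') *
          (\<Sum>k=1..n. q ^ (k - 1) * qAppell2 q (a * q ^ k) b (b' * q) c (c' * q) (x * q) y)"
  using assms
proof (induction n)
  case (Suc n)
  have IH: "qAppell2 q (a * q ^ n) b b' c c' x y = qAppell2 q a b b' c c' x y
      + a * x * (1 - b) / (1 - c) *
          (\<Sum>k=1..n. q ^ (k - 1) * qAppell2 q (a * q ^ k) (b * q) b' (c * q) c' x y)
      + a * y * (1 - b') / (1 - c') *
          (\<Sum>k=1..n. q ^ (k - 1) * qAppell2 q (a * q ^ k) b (b' * q) c (c' * q) (x * q) y)"
    by (rule Suc.IH, rule Suc.prems) simp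
  have shift: "a * q ^ n * q = a * q ^ Suc n"
    by (simp add: mult.assoc mult.commute)
  show ?case
    using Suc.prems[of n, unfolded shift] unfolding IH by (simp add: algebra_simps)
qed simp

lemma qAppell2_shift_down_telescope:
  assumes "q \<noteq> 0"
    and "\<And>k. k < n \<Longrightarrow>
      qAppell2 q (a * q powi - int (Suc k) * q) b b' c c' x y = qAppell2 q (a * q powi - int (Suc k)) b b' c c' x y
      + a * q powi - int (Suc k) * x * (1 - b) / (1 - c) *
          qAppell2 q (a * q powi - int (Suc k) * q) (b * q) b' (c * q) c' x y
      + a * q powi - int (Suc k) * y * (1 - b') / (1 - c') *
          qAppell2 q (a * q powi - int (Suc k) * q) b (b' * q) c (c' * q) (x * q) y"
  shows "qAppell2 q (a * q powi (- int n)) b b' c c' x y = qAppell2 q a b b' c c' x y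
      - a * x * (1 - b) / (1 - c) *
          (\<Sum>k=1..n. q powi (- int k) * qAppell2 q (a * q powi (1 - int k)) (b * q) b' (c * q) c' x y)
      - a * y * (1 - b') / (1 - c') *
          (\<Sum>k=1..n. q powi (- int k) * qAppell2 q (a * q powi (1 - int k)) b (b' * q) c (c' * q) (x * q) y)"
  using assms(2)
proof (induction n)
  case (Suc n)
  have IH: "qAppell2 q (a * q powi (- int n)) b b' c c' x y = qAppell2 q a b b' c c' x y
      - a * x * (1 - b) / (1 - c) *
          (\<Sum>k=1..n. q powi (- int k) * qAppell2 q (a * q powi (1 - int k)) (b * q) b' (c * q) c' x y)
      - a * y * (1 - b') / (1 - c') *
          (\<Sum>k=1..n. q powi (- int k) * qAppell2 q (a * q powi (1 - int k)) b (b' * q) c (c' * q) (x * q) y)"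
    by (rule Suc.IH, rule Suc.prems) simp
  have shift: "a * q powi - int (Suc n) * q = a * q powi (- int n)"
    using assms(1) by (simp add: power_int_minus field_simps del: of_nat_Suc)
  show ?case
    using Suc.prems[of n, unfolded shift] unfolding IH by (simp add: algebra_simps)
qed simp

theorem theorem6:
  fixes q a b b' c c' :: complex and n :: nat
  assumes "0 < norm q" and "norm q < 1"
    and "\<And>j::nat. c * q ^ j \<noteq> 1" and "\<And>j::nat. c' * q ^ j \<noteq> 1"
    and "n \<ge> 1"
  shows "\<exists>r>0. \<forall>x y :: complex. norm x < r \<longrightarrow> norm y < r \<longrightarrow>
     qAppell2 q (a * q ^ n) b b' c c' x y =
       qAppell2 q a b b' c c' x y
       + a * x * (1 - b) / (1 - c) *
           (\<Sum>k=1..n. q ^ (k - 1) * qAppell2 q (a * q ^ k) (b * q) b' (c * q) c' x y)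
       + a * y * (1 - b') / (1 - c') *
           (\<Sum>k=1..n. q ^ (k - 1) * qAppell2 q (a * q ^ k) b (b' * q) c (c' * q) (x * q) y)
     \<and>
     qAppell2 q (a * q powi (- int n)) b b' c c' x y =
       qAppell2 q a b b' c c' x y
       - a * x * (1 - b) / (1 - c) *
           (\<Sum>k=1..n. q powi (- int k) *
              qAppell2 q (a * q powi (1 - int k)) (b * q) b' (c * q) c' x y)
       - a * y * (1 - b') / (1 - c') *
           (\<Sum>k=1..n. q powi (- int k) *
              qAppell2 q (a * q powi (1 - int k)) b (b' * q) c (c' * q) (x * q) y)"
proof -
  have "q \<noteq> 0" using assms(1) by auto
  define A where "A = norm a / norm q ^ n"
  obtain r where "r > 0" and contiguous: "\<And>a' x y. norm a' \<le> A \<Longrightarrow> norm x < r \<Longrightarrow> norm y < r \<Longrightarrow>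
      qAppell2 q (a' * q) b b' c c' x y = qAppell2 q a' b b' c c' x y
        + a' * x * (1 - b) / (1 - c) * qAppell2 q (a' * q) (b * q) b' (c * q) c' x y
        + a' * y * (1 - b') / (1 - c') * qAppell2 q (a' * q) b (b' * q) c (c' * q) (x * q) y"
    using qAppell2_contiguous_near_zero[OF assms(2-4), where A = A] by blast
  have "norm a \<le> A"
    using assms(1,2) by (simp add: A_def le_divide_eq power_le_one mult_left_le)
  moreover have "norm (a * q ^ k) \<le> norm a" for k
    using assms(2) by (simp add: norm_mult norm_power mult_left_le power_le_one)
  ultimately have up: "norm (a * q ^ k) \<le> A" for k
    by (meson order_trans)
  have down: "norm (a * q powi - int k) \<le> A" if "k \<le> n" for k
  proof -
    have "norm q ^ n \<le> norm q ^ k"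
      using assms(1,2) that by (intro power_decreasing) auto
    then show ?thesis
      using assms(1) by (simp add: A_def power_int_minus norm_divide norm_power divide_left_mono
          flip: divide_inverse)
  qed
  show ?thesis
    using \<open>r > 0\<close> \<open>q \<noteq> 0\<close>
    by (intro exI[of _ r] conjI allI impI qAppell2_shift_up_telescope qAppell2_shift_down_telescope
        contiguous up down) auto
qed

end
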